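(* Let $X,Y$ be a section-pair, let $t\ge1$ be odd, and let $X_1,Y_1;\dots;X_t,Y_t$ be subsection pairs with the $X_i$ pairwise vertex-disjoint and the $Y_i$ pairwise vertex-disjoint, such that for all $1\le i<j\le t$, $X_i$ is above $X_j$ and $Y_i$ is below $Y_j$. Let $d_1,\dots,d_t\ge1$ be integers. Suppose that for each $1\le i\le t$ there are two paths $Q_i^R,Q_i^B$ in $H(X_i,Y_i)$ with $|Q_i^R|-|Q_i^B|\ge d_i$, which both go between $x_i^{t}$ and $y_i^{t}$ if $i$ is odd, and both go between $x_i^{b}$ and $y_i^{b}$ if $i$ is even. Let $D:=\max_{1\le i\le t}(|X_i|+|Y_i|)$. Then there are paths $P_1,\dots,P_{(t+3)/2}$ in $H(X,Y)$ between $x^{t}$ and $y^{t}$ such that $|P_{(t+3)/2}|-|P_1|\ge\sum_{i=1}^t d_i$ and $1\le |P_{i+1}|-|P_i|\le 2D$ for every $1\le i\le (t+1)/2$.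
   Context: A section-pair in a graph $G$ is a pair $X,Y$ of vertex-disjoint paths; the two endpoints of $X$ are designated its top $x^{t}$ and bottom $x^{b}$, and those of $Y$ its top $y^t$ and bottom $y^b$. For distinct $x_1,x_2\in X$, $x_1$ is above $x_2$ if $x_1$ is closer to $x^t$ along $X$ than $x_2$, otherwise below; similarly in $Y$. For vertex sets $A,B\subseteq X$ (or $\subseteq Y$), $A$ is above (resp. below) $B$ if every vertex of $A$ is above (resp. below) every vertex of $B$. A chord is an edge of $G$ with one endpoint in $X$ and one in $Y$. A subsection pair of $X,Y$ is a section-pair $X',Y'$ where $X'$ is a subpath of $X$ and $Y'$ a subpath of $Y$, with top of $X'$ its endpoint closer to $x^t$ and bottom the other one (similarly for $Y'$); $x_i^t,x_i^b,y_i^t,y_i^b$ denote the tops and bottoms of $X_i,Y_i$. For a section-pair $X',Y'$, $H(X',Y')$ is the graph with vertex set $V(X')\cup V(Y')$ whose edges are the edges of $X'$, the edges of $Y'$, and the chords with one endpoint in $X'$ and one in $Y'$. $|P|$ denotes the number of edges of a path $P$. *)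

theory Defs
  imports Main "HOL-Library.Sublist"
begin

definition simple_graph :: "('v \<Rightarrow> 'v \<Rightarrow> bool) \<Rightarrow> bool" where
  "simple_graph E \<longleftrightarrow> (\<forall>u v. E u v \<longrightarrow> E v u) \<and> (\<forall>u. \<not> E u u)"

definition is_path :: "('v \<Rightarrow> 'v \<Rightarrow> bool) \<Rightarrow> 'v list \<Rightarrow> bool" where
  "is_path E P \<longleftrightarrow> P \<noteq> [] \<and> distinct P \<and> successively E P"

definition plen :: "'v list \<Rightarrow> nat" where
  "plen P = length P - 1"

text \<open>Section pair: two vertex-disjoint paths of G; top = hd, bottom = last.\<close>
definition section_pair :: "('v \<Rightarrow> 'v \<Rightarrow> bool) \<Rightarrow> 'v list \<Rightarrow> 'v list \<Rightarrow> bool" where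
  "section_pair E X Y \<longleftrightarrow> is_path E X \<and> is_path E Y \<and> set X \<inter> set Y = {}"

text \<open>Subsection pair: X' a subpath of X, Y' a subpath of Y, oriented consistently
(top of X' is the end closer to the top of X).\<close>
definition subsection_pair :: "'v list \<Rightarrow> 'v list \<Rightarrow> 'v list \<Rightarrow> 'v list \<Rightarrow> bool" where
  "subsection_pair X Y X' Y' \<longleftrightarrow> X' \<noteq> [] \<and> sublist X' X \<and> Y' \<noteq> [] \<and> sublist Y' Y"

definition above :: "'v list \<Rightarrow> 'v set \<Rightarrow> 'v set \<Rightarrow> bool" where
  "above X A B \<longleftrightarrow> (\<forall>a\<in>A. \<forall>b\<in>B. \<exists>i j. i < j \<and> j < length X \<and> X ! i = a \<and> X ! j = b)"

definition below :: "'v list \<Rightarrow> 'v set \<Rightarrow> 'v set \<Rightarrow> bool" where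
  "below X A B \<longleftrightarrow> above X B A"

definition path_edge :: "'v list \<Rightarrow> 'v \<Rightarrow> 'v \<Rightarrow> bool" where
  "path_edge P u v \<longleftrightarrow> (\<exists>i. Suc i < length P \<and>
      ((P ! i = u \<and> P ! Suc i = v) \<or> (P ! i = v \<and> P ! Suc i = u)))"

definition H_edge :: "('v \<Rightarrow> 'v \<Rightarrow> bool) \<Rightarrow> 'v list \<Rightarrow> 'v list \<Rightarrow> 'v \<Rightarrow> 'v \<Rightarrow> bool" where
  "H_edge E X Y u v \<longleftrightarrow> path_edge X u v \<or> path_edge Y u v \<or>
     (E u v \<and> ((u \<in> set X \<and> v \<in> set Y) \<or> (u \<in> set Y \<and> v \<in> set X)))"

definition path_in_H :: "('v \<Rightarrow> 'v \<Rightarrow> bool) \<Rightarrow> 'v list \<Rightarrow> 'v list \<Rightarrow> 'v list \<Rightarrow> bool" where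
  "path_in_H E X Y P \<longleftrightarrow> is_path (H_edge E X Y) P \<and> set P \<subseteq> set X \<union> set Y"

definition path_between :: "'v list \<Rightarrow> 'v \<Rightarrow> 'v \<Rightarrow> bool" where
  "path_between P a b \<longleftrightarrow> (hd P = a \<and> last P = b) \<or> (hd P = b \<and> last P = a)"

end

theory Submission
  imports Defs
begin

(* All the required paths follow one zigzag route through H(X,Y): down X from x^t to
   the top of X_1, across to Y_1 along a path of the first subsection pair, up Y to the bottom of
   Y_2, across to X_2, down X to the top of X_3, and so on, and finally up Y from Y_t to y^t.
   Since the X_i descend along X while the Y_i ascend along Y, after the i-th crossing the route
   has only used the part of X above the bottom of X_i and the part of Y below the top of Y_i;
   everything still to be traversed lies outside this region except for the current endpoint, so
   the route is a path. Its length is a constant plus the lengths of the crossings. The k-th path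
   uses Q_i^R for i <= 2k-3 and Q_i^B otherwise, so consecutive paths differ in at most two
   crossings, each changing the length by at least d_i >= 1 and at most |X_i| + |Y_i| <= D. *)

lemma is_path_sublist:
  assumes "is_path R L" "sublist P L" "P \<noteq> []"
  shows "is_path R P"
proof -
  obtain p s where "L = p @ P @ s" using assms(2) by (auto simp: sublist_def)
  then show ?thesis using assms(1,3) by (auto simp: is_path_def successively_append_iff)
qed

lemma is_path_rev:
  assumes "is_path R P" "\<And>u v. R u v \<Longrightarrow> R v u"
  shows "is_path R (rev P)"
  using assms unfolding is_path_def by (auto elim: successively_mono)

lemma path_edge_sublist:
  assumes "sublist M L" "path_edge M u v"
  shows "path_edge L u v"
proof -
  obtain p s where L: "L = p @ M @ s" using assms(1) by (auto simp: sublist_def)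
  obtain i where i: "Suc i < length M" "(M ! i = u \<and> M ! Suc i = v) \<or> (M ! i = v \<and> M ! Suc i = u)"
    using assms(2) unfolding path_edge_def by blast
  have "M ! k = L ! (length p + k)" if "k < length M" for k
    using that by (simp add: L nth_append)
  from this[of i] this[of "Suc i"] show ?thesis
    unfolding path_edge_def using i by (intro exI[of _ "length p + i"]) (auto simp: L)
qed

lemma plen_rev [simp]: "plen (rev P) = plen P"
  by (simp add: plen_def)

definition segment :: "'v list \<Rightarrow> nat \<Rightarrow> nat \<Rightarrow> 'v list" where
  "segment L i j = map ((!) L) [i..<Suc j]"

lemma set_segment: "set (segment L i j) = (!) L ` {i..j}"
  by (auto simp: segment_def)

lemma hd_segment: "i \<le> j \<Longrightarrow> hd (segment L i j) = L ! i"
  by (simp add: segment_def hd_map upt_rec)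

lemma last_segment: "i \<le> j \<Longrightarrow> last (segment L i j) = L ! j"
  by (simp add: segment_def last_map)

lemma plen_segment: "plen (segment L i j) = j - i"
  by (simp add: segment_def plen_def)

lemma segment_conv_take_drop: "j < length L \<Longrightarrow> segment L i j = take (Suc j - i) (drop i L)"
  by (rule nth_equalityI) (auto simp: segment_def simp del: upt_Suc)

lemma is_path_segment:
  assumes "is_path R L" "i \<le> j" "j < length L"
  shows "is_path R (segment L i j)"
proof (rule is_path_sublist[OF assms(1)])
  show "sublist (segment L i j) L"
    unfolding segment_conv_take_drop[OF assms(3)]
    by (meson sublist_drop sublist_order.order_trans sublist_take)
  show "segment L i j \<noteq> []" using assms(2) by (simp add: segment_def)
qed

lemma sublist_obtain_segment:
  assumes "sublist M L" "M \<noteq> []"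
  obtains i j where "i \<le> j" "j < length L" "M = segment L i j"
proof -
  obtain p s where L: "L = p @ M @ s" using assms(1) by (auto simp: sublist_def)
  have "0 < length M" using assms(2) by simp
  show ?thesis
  proof
    show "length p \<le> length p + length M - 1" "length p + length M - 1 < length L"
      unfolding L length_append using \<open>0 < length M\<close> by linarith+
    show "M = segment L (length p) (length p + length M - 1)"
      using assms(2) by (intro nth_equalityI) (auto simp: segment_def L nth_append)
  qed
qed

definition glue :: "'v list \<Rightarrow> 'v list \<Rightarrow> 'v list" where
  "glue A B = A @ tl B"

lemma glue_within:
  assumes "is_path R A" "is_path R B" "last A = hd B"
    and "set A \<subseteq> U" "set B \<subseteq> V" "U \<inter> V \<subseteq> {hd B}"
  shows "is_path R (glue A B)" "set (glue A B) \<subseteq> U \<union> V"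
    "hd (glue A B) = hd A" "last (glue A B) = last B" "plen (glue A B) = plen A + plen B"
proof -
  obtain b B' where B: "B = b # B'" using assms(2) by (cases B) (auto simp: is_path_def)
  have "A \<noteq> []" using assms(1) by (simp add: is_path_def)
  moreover have "set A \<inter> set B' = {}"
    using assms(2,4-6) B by (auto simp: is_path_def)
  ultimately show "is_path R (glue A B)"
    using assms(1-3) B by (auto simp: is_path_def glue_def successively_append_iff successively_Cons)
  show "set (glue A B) \<subseteq> U \<union> V" using assms(4,5) B by (auto simp: glue_def)
  show "hd (glue A B) = hd A" using \<open>A \<noteq> []\<close> by (simp add: glue_def)
  show "last (glue A B) = last B" using assms(3) B by (cases B') (auto simp: glue_def)
  show "plen (glue A B) = plen A + plen B" using \<open>A \<noteq> []\<close> B by (cases A) (auto simp: glue_def plen_def)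
qed

definition orient :: "'v \<Rightarrow> 'v list \<Rightarrow> 'v list" where
  "orient a P = (if hd P = a then P else rev P)"

lemma orient:
  assumes "path_between P a b" "P \<noteq> []"
  shows "hd (orient a P) = a" "last (orient a P) = b" "set (orient a P) = set P"
    "plen (orient a P) = plen P"
  using assms unfolding orient_def path_between_def by (auto simp: hd_rev last_rev)

lemma is_path_orient: "is_path R P \<Longrightarrow> (\<And>u v. R u v \<Longrightarrow> R v u) \<Longrightarrow> is_path R (orient a P)"
  by (simp add: orient_def is_path_rev)

locale path_pair =
  fixes R :: "'a \<Rightarrow> 'a \<Rightarrow> bool" and X Y :: "'a list"
  assumes sym: "\<And>u v. R u v \<Longrightarrow> R v u"
    and path_X: "is_path R X" and path_Y: "is_path R Y"
    and disjoint: "set X \<inter> set Y = {}"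
begin

lemma regions_Int:
  assumes "I \<subseteq> {..<length X}" "I' \<subseteq> {..<length X}" "J \<subseteq> {..<length Y}" "J' \<subseteq> {..<length Y}"
  shows "((!) X ` I \<union> (!) Y ` J) \<inter> ((!) X ` I' \<union> (!) Y ` J') = (!) X ` (I \<inter> I') \<union> (!) Y ` (J \<inter> J')"
proof -
  have "inj_on ((!) X) {..<length X}" "inj_on ((!) Y) {..<length Y}"
    using path_X path_Y by (auto simp: is_path_def intro: inj_on_nth)
  then have "(!) X ` (I \<inter> I') = (!) X ` I \<inter> (!) X ` I'" "(!) Y ` (J \<inter> J') = (!) Y ` J \<inter> (!) Y ` J'"
    using assms by (simp_all add: inj_on_image_Int)
  moreover have "(!) X ` I \<inter> (!) Y ` J' = {}" "(!) Y ` J \<inter> (!) X ` I' = {}"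
    using assms disjoint by (fastforce dest: nth_mem)+
  ultimately show ?thesis by (auto simp: Int_Un_distrib Int_Un_distrib2)
qed

lemma glue_regions:
  assumes W: "is_path R W" "set W \<subseteq> (!) X ` I \<union> (!) Y ` J"
    and Q: "is_path R Q" "set Q \<subseteq> (!) X ` I' \<union> (!) Y ` J'"
    and "last W = hd Q" "I \<union> I' \<subseteq> {..<length X}" "J \<union> J' \<subseteq> {..<length Y}"
    and meet: "(!) X ` (I \<inter> I') \<union> (!) Y ` (J \<inter> J') \<subseteq> {hd Q}"
  shows "is_path R (glue W Q)" "set (glue W Q) \<subseteq> (!) X ` (I \<union> I') \<union> (!) Y ` (J \<union> J')"
    "hd (glue W Q) = hd W" "last (glue W Q) = last Q" "plen (glue W Q) = plen W + plen Q"
proof -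
  have "((!) X ` I \<union> (!) Y ` J) \<inter> ((!) X ` I' \<union> (!) Y ` J') \<subseteq> {hd Q}"
    using meet assms(6,7) by (subst regions_Int) auto
  note G = glue_within[OF W(1) Q(1) assms(5) W(2) Q(2) this]
  then show "is_path R (glue W Q)" "hd (glue W Q) = hd W" "last (glue W Q) = last Q"
    "plen (glue W Q) = plen W + plen Q"
    by simp_all
  from G(2) show "set (glue W Q) \<subseteq> (!) X ` (I \<union> I') \<union> (!) Y ` (J \<union> J')"
    by (auto simp: image_Un)
qed

lemma descend_along_X:
  assumes W: "is_path R W" "last W = X ! s" "set W \<subseteq> (!) X ` {..s} \<union> (!) Y ` {l..<length Y}"
    and "s \<le> a" "a < length X"
  defines "W' \<equiv> glue W (segment X s a)"
  shows "is_path R W'" "hd W' = hd W" "last W' = X ! a"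
    "set W' \<subseteq> (!) X ` {..a} \<union> (!) Y ` {l..<length Y}" "plen W' = plen W + (a - s)"
proof -
  let ?S = "segment X s a"
  have S: "is_path R ?S" "hd ?S = X ! s" "last ?S = X ! a" "set ?S \<subseteq> (!) X ` {s..a} \<union> (!) Y ` {}"
    using assms(4,5) by (auto simp: is_path_segment path_X hd_segment last_segment set_segment)
  have "{..s} \<inter> {s..a} = {s}" "{..s} \<union> {s..a} = {..a}" using assms(4) by auto
  then have "{..s} \<union> {s..a} \<subseteq> {..<length X}" "{l..<length Y} \<union> {} \<subseteq> {..<length Y}"
    "(!) X ` ({..s} \<inter> {s..a}) \<union> (!) Y ` ({l..<length Y} \<inter> {}) \<subseteq> {hd ?S}"
    using assms(5) S(2) by auto
  note G = glue_regions[OF W(1,3) S(1,4) W(2)[folded S(2)] this, folded W'_def]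
  show "is_path R W'" "hd W' = hd W" "last W' = X ! a" "plen W' = plen W + (a - s)"
    using G S by (simp_all add: plen_segment)
  show "set W' \<subseteq> (!) X ` {..a} \<union> (!) Y ` {l..<length Y}"
    using G(2) \<open>{..s} \<union> {s..a} = {..a}\<close> by simp
qed

lemma ascend_along_Y:
  assumes W: "is_path R W" "last W = Y ! s" "set W \<subseteq> (!) X ` {..p} \<union> (!) Y ` {s..<length Y}"
    and "p < length X" "e \<le> s" "s < length Y"
  defines "W' \<equiv> glue W (rev (segment Y e s))"
  shows "is_path R W'" "hd W' = hd W" "last W' = Y ! e"
    "set W' \<subseteq> (!) X ` {..p} \<union> (!) Y ` {e..<length Y}" "plen W' = plen W + (s - e)"
proof -
  let ?S = "rev (segment Y e s)"
  have S: "is_path R ?S" "hd ?S = Y ! s" "last ?S = Y ! e" "set ?S \<subseteq> (!) X ` {} \<union> (!) Y ` {e..s}"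
    using assms(5,6) by (auto simp: is_path_rev is_path_segment path_Y sym hd_rev last_rev
        hd_segment last_segment set_segment)
  have "{s..<length Y} \<inter> {e..s} = {s}" "{s..<length Y} \<union> {e..s} = {e..<length Y}"
    using assms(5,6) by auto
  then have "{..p} \<union> {} \<subseteq> {..<length X}" "{s..<length Y} \<union> {e..s} \<subseteq> {..<length Y}"
    "(!) X ` ({..p} \<inter> {}) \<union> (!) Y ` ({s..<length Y} \<inter> {e..s}) \<subseteq> {hd ?S}"
    using assms(4-6) S(2) by auto
  note G = glue_regions[OF W(1,3) S(1,4) W(2)[folded S(2)] this, folded W'_def]
  show "is_path R W'" "hd W' = hd W" "last W' = Y ! e" "plen W' = plen W + (s - e)"
    using G S by (simp_all add: plen_segment)
  show "set W' \<subseteq> (!) X ` {..p} \<union> (!) Y ` {e..<length Y}"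
    using G(2) \<open>{s..<length Y} \<union> {e..s} = {e..<length Y}\<close> by simp
qed

lemma glue_crossing:
  assumes W: "is_path R W" "set W \<subseteq> (!) X ` {..p} \<union> (!) Y ` {l..<length Y}"
    and Q: "is_path R Q" "set Q \<subseteq> (!) X ` {a..b} \<union> (!) Y ` {c..e}" "last W = hd Q"
    and "p \<le> b" "b < length X" "c \<le> l" "e < length Y"
    and meet: "(!) X ` ({..p} \<inter> {a..b}) \<union> (!) Y ` ({l..<length Y} \<inter> {c..e}) \<subseteq> {hd Q}"
  shows "is_path R (glue W Q)" "hd (glue W Q) = hd W" "last (glue W Q) = last Q"
    "set (glue W Q) \<subseteq> (!) X ` {..b} \<union> (!) Y ` {c..<length Y}" "plen (glue W Q) = plen W + plen Q"
proof -
  have sub: "{..p} \<union> {a..b} \<subseteq> {..b}" "{l..<length Y} \<union> {c..e} \<subseteq> {c..<length Y}"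
    using assms(6-9) by auto
  then have "{..p} \<union> {a..b} \<subseteq> {..<length X}" "{l..<length Y} \<union> {c..e} \<subseteq> {..<length Y}"
    using assms(7,9) by auto
  note G = glue_regions[OF W Q this meet]
  then show "is_path R (glue W Q)" "hd (glue W Q) = hd W" "last (glue W Q) = last Q"
    "plen (glue W Q) = plen W + plen Q"
    by simp_all
  from G(2) sub show "set (glue W Q) \<subseteq> (!) X ` {..b} \<union> (!) Y ` {c..<length Y}"
    by (blast dest: image_mono)
qed

lemma extend_along_X:
  assumes W: "is_path R W" "last W = X ! s" "set W \<subseteq> (!) X ` {..s} \<union> (!) Y ` {l..<length Y}"
    and Q: "is_path R Q" "hd Q = X ! a" "set Q \<subseteq> (!) X ` {a..b} \<union> (!) Y ` {c..e}"
    and "s \<le> a" "a \<le> b" "b < length X" "c \<le> e" "e < l" "e < length Y"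
  defines "W' \<equiv> glue (glue W (segment X s a)) Q"
  shows "is_path R W'" "hd W' = hd W" "last W' = last Q"
    "set W' \<subseteq> (!) X ` {..b} \<union> (!) Y ` {c..<length Y}" "plen W' = plen W + (a - s) + plen Q"
proof -
  have "a < length X" using assms(8,9) by simp
  note D = descend_along_X[OF W \<open>s \<le> a\<close> this]
  have "{..a} \<inter> {a..b} = {a}" "{l..<length Y} \<inter> {c..e} = {}" "c \<le> l"
    using assms(7-12) by auto
  then have "(!) X ` ({..a} \<inter> {a..b}) \<union> (!) Y ` ({l..<length Y} \<inter> {c..e}) \<subseteq> {hd Q}"
    using Q(2) by simp
  note G = glue_crossing[OF D(1,4) Q(1,3) _ \<open>a \<le> b\<close> \<open>b < length X\<close> \<open>c \<le> l\<close> \<open>e < length Y\<close> this]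
  show "is_path R W'" "hd W' = hd W" "last W' = last Q"
    "set W' \<subseteq> (!) X ` {..b} \<union> (!) Y ` {c..<length Y}" "plen W' = plen W + (a - s) + plen Q"
    using G D Q(2) unfolding W'_def by simp_all
qed

lemma extend_along_Y:
  assumes W: "is_path R W" "last W = Y ! s" "set W \<subseteq> (!) X ` {..p} \<union> (!) Y ` {s..<length Y}"
    and Q: "is_path R Q" "hd Q = Y ! e" "set Q \<subseteq> (!) X ` {a..b} \<union> (!) Y ` {c..e}"
    and "p < a" "a \<le> b" "b < length X" "c \<le> e" "e \<le> s" "s < length Y"
  defines "W' \<equiv> glue (glue W (rev (segment Y e s))) Q"
  shows "is_path R W'" "hd W' = hd W" "last W' = last Q"
    "set W' \<subseteq> (!) X ` {..b} \<union> (!) Y ` {c..<length Y}" "plen W' = plen W + (s - e) + plen Q"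
proof -
  have "p < length X" using assms(7-9) by simp
  note A = ascend_along_Y[OF W this \<open>e \<le> s\<close> \<open>s < length Y\<close>]
  have "{..p} \<inter> {a..b} = {}" "{e..<length Y} \<inter> {c..e} = {e}" "p \<le> b" "e < length Y"
    using assms(7-12) by auto
  then have "(!) X ` ({..p} \<inter> {a..b}) \<union> (!) Y ` ({e..<length Y} \<inter> {c..e}) \<subseteq> {hd Q}"
    using Q(2) by simp
  note G = glue_crossing[OF A(1,4) Q(1,3) _ \<open>p \<le> b\<close> \<open>b < length X\<close> \<open>c \<le> e\<close> \<open>e < length Y\<close> this]
  show "is_path R W'" "hd W' = hd W" "last W' = last Q"
    "set W' \<subseteq> (!) X ` {..b} \<union> (!) Y ` {c..<length Y}" "plen W' = plen W + (s - e) + plen Q"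
    using G A Q(2) unfolding W'_def by simp_all
qed

end

(* xt i, xb i (resp. yt i, yb i) are the positions in X (resp. Y) of the top and bottom of X_i
   (resp. Y_i); positions count from the top. *)
locale zigzag = path_pair +
  fixes t :: nat and xt xb yt yb :: "nat \<Rightarrow> nat"
  assumes intervals: "\<And>i. i \<in> {1..t} \<Longrightarrow> xt i \<le> xb i \<and> xb i < length X \<and> yt i \<le> yb i \<and> yb i < length Y"
    and X_order: "\<And>i j. 1 \<le> i \<Longrightarrow> i < j \<Longrightarrow> j \<le> t \<Longrightarrow> xb i < xt j"
    and Y_order: "\<And>i j. 1 \<le> i \<Longrightarrow> i < j \<Longrightarrow> j \<le> t \<Longrightarrow> yb j < yt i"
begin

definition crossing :: "nat \<Rightarrow> 'a list \<Rightarrow> bool" where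
  "crossing i P \<longleftrightarrow> is_path R P \<and> set P \<subseteq> (!) X ` {xt i..xb i} \<union> (!) Y ` {yt i..yb i} \<and>
     (if odd i then hd P = X ! xt i \<and> last P = Y ! yt i else hd P = Y ! yb i \<and> last P = X ! xb i)"

lemma crossing_orient:
  assumes "is_path R P" "set P \<subseteq> (!) X ` {xt i..xb i} \<union> (!) Y ` {yt i..yb i}"
    and "path_between P (if odd i then X ! xt i else Y ! yb i) (if odd i then Y ! yt i else X ! xb i)"
  shows "crossing i (orient (if odd i then X ! xt i else Y ! yb i) P)"
proof -
  have "P \<noteq> []" using assms(1) by (simp add: is_path_def)
  with assms show ?thesis
    using orient[OF assms(3)] is_path_orient[OF assms(1) sym] by (auto simp: crossing_def)
qed

(* After crossing n the walk has used X only down to position x_reach n and Y only up to position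
   y_reach n; before any crossing, y_reach 0 = length Y makes the Y-part empty. *)
definition x_reach :: "nat \<Rightarrow> nat" where
  "x_reach n = (if n = 0 then 0 else xb n)"

definition y_reach :: "nat \<Rightarrow> nat" where
  "y_reach n = (if n = 0 then length Y else yt n)"

definition connector :: "nat \<Rightarrow> 'a list" where
  "connector n = (if even n then segment X (x_reach n) (xt (Suc n)) else rev (segment Y (yb (Suc n)) (yt n)))"

primrec walk :: "(nat \<Rightarrow> 'a list) \<Rightarrow> nat \<Rightarrow> 'a list" where
  "walk Q 0 = [X ! 0]"
| "walk Q (Suc n) = glue (glue (walk Q n) (connector n)) (Q (Suc n))"

lemma walk_invariant:
  assumes "n \<le> t" "\<And>i. i \<in> {1..n} \<Longrightarrow> crossing i (Q i)"
  shows "is_path R (walk Q n) \<and> hd (walk Q n) = X ! 0 \<and>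
    last (walk Q n) = (if odd n then Y ! yt n else X ! x_reach n) \<and>
    set (walk Q n) \<subseteq> (!) X ` {..x_reach n} \<union> (!) Y ` {y_reach n..<length Y} \<and>
    plen (walk Q n) = (\<Sum>m<n. plen (connector m)) + (\<Sum>i=1..n. plen (Q i))"
  using assms
proof (induction n)
  case 0
  have "X \<noteq> []" using path_X by (simp add: is_path_def)
  then show ?case by (auto simp: is_path_def plen_def x_reach_def y_reach_def)
next
  case (Suc n)
  let ?m = "Suc n" and ?W = "walk Q n"
  have IH: "is_path R ?W" "hd ?W = X ! 0" "last ?W = (if odd n then Y ! yt n else X ! x_reach n)"
    "set ?W \<subseteq> (!) X ` {..x_reach n} \<union> (!) Y ` {y_reach n..<length Y}"
    "plen ?W = (\<Sum>m<n. plen (connector m)) + (\<Sum>i=1..n. plen (Q i))"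
    using Suc by auto
  have Q: "is_path R (Q ?m)" "set (Q ?m) \<subseteq> (!) X ` {xt ?m..xb ?m} \<union> (!) Y ` {yt ?m..yb ?m}"
    "hd (Q ?m) = (if even n then X ! xt ?m else Y ! yb ?m)"
    "last (Q ?m) = (if even n then Y ! yt ?m else X ! xb ?m)"
    using Suc.prems(2)[of ?m] by (auto simp: crossing_def)
  have m: "xt ?m \<le> xb ?m" "xb ?m < length X" "yt ?m \<le> yb ?m" "yb ?m < length Y"
    using intervals[of ?m] Suc.prems(1) by auto
  have prev: "xb n < xt ?m" "yb ?m < yt n" "yt n < length Y" if "n \<noteq> 0"
    using that X_order[of n ?m] Y_order[of n ?m] intervals[of n] Suc.prems(1) by auto
  show ?case
  proof (cases "even n")
    case True
    have "x_reach n \<le> xt ?m" "yb ?m < y_reach n" using prev m by (auto simp: x_reach_def y_reach_def)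
    with IH Q m True have "is_path R (walk Q ?m)" "hd (walk Q ?m) = X ! 0" "last (walk Q ?m) = Y ! yt ?m"
      "set (walk Q ?m) \<subseteq> (!) X ` {..xb ?m} \<union> (!) Y ` {yt ?m..<length Y}"
      "plen (walk Q ?m) = plen ?W + (xt ?m - x_reach n) + plen (Q ?m)"
      using extend_along_X[of ?W "x_reach n" "y_reach n" "Q ?m" "xt ?m" "xb ?m" "yt ?m" "yb ?m"]
      by (simp_all add: connector_def)
    with IH(5) True show ?thesis by (simp add: x_reach_def y_reach_def connector_def plen_segment)
  next
    case False
    then have "n \<noteq> 0" by (cases n) auto
    with IH(3,4) False have "last ?W = Y ! yt n" "set ?W \<subseteq> (!) X ` {..xb n} \<union> (!) Y ` {yt n..<length Y}"
      by (simp_all add: x_reach_def y_reach_def)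
    with IH(1) Q m prev[OF \<open>n \<noteq> 0\<close>] False
    have "is_path R (walk Q ?m)" "hd (walk Q ?m) = X ! 0" "last (walk Q ?m) = X ! xb ?m"
      "set (walk Q ?m) \<subseteq> (!) X ` {..xb ?m} \<union> (!) Y ` {yt ?m..<length Y}"
      "plen (walk Q ?m) = plen ?W + (yt n - yb ?m) + plen (Q ?m)"
      using extend_along_Y[of ?W "yt n" "xb n" "Q ?m" "yb ?m" "xt ?m" "xb ?m" "yt ?m"] IH(2)
      by (simp_all add: connector_def)
    with IH(5) False \<open>n \<noteq> 0\<close> show ?thesis by (simp add: x_reach_def y_reach_def connector_def plen_segment)
  qed
qed

definition zigzag_path :: "(nat \<Rightarrow> 'a list) \<Rightarrow> 'a list" where
  "zigzag_path Q = glue (walk Q t) (rev (segment Y 0 (yt t)))"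

lemma zigzag_path:
  assumes "odd t" "\<And>i. i \<in> {1..t} \<Longrightarrow> crossing i (Q i)"
  shows "is_path R (zigzag_path Q)" "hd (zigzag_path Q) = X ! 0" "last (zigzag_path Q) = Y ! 0"
    "set (zigzag_path Q) \<subseteq> set X \<union> set Y"
    "plen (zigzag_path Q) = (\<Sum>m<t. plen (connector m)) + yt t + (\<Sum>i=1..t. plen (Q i))"
proof -
  have "t \<noteq> 0" using assms(1) by (cases t) auto
  then have "xb t < length X" "yt t < length Y" using intervals[of t] by auto
  moreover have "is_path R (walk Q t)" "hd (walk Q t) = X ! 0" "last (walk Q t) = Y ! yt t"
    "set (walk Q t) \<subseteq> (!) X ` {..xb t} \<union> (!) Y ` {yt t..<length Y}"
    "plen (walk Q t) = (\<Sum>m<t. plen (connector m)) + (\<Sum>i=1..t. plen (Q i))"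
    using walk_invariant[of t Q] assms \<open>t \<noteq> 0\<close> by (simp_all add: x_reach_def y_reach_def)
  ultimately have G: "is_path R (zigzag_path Q)" "hd (zigzag_path Q) = X ! 0" "last (zigzag_path Q) = Y ! 0"
    "set (zigzag_path Q) \<subseteq> (!) X ` {..xb t} \<union> (!) Y ` {0..<length Y}"
    "plen (zigzag_path Q) = plen (walk Q t) + yt t"
    using ascend_along_Y[of "walk Q t" "yt t" "xb t" 0] unfolding zigzag_path_def by simp_all
  then show "is_path R (zigzag_path Q)" "hd (zigzag_path Q) = X ! 0" "last (zigzag_path Q) = Y ! 0"
    "plen (zigzag_path Q) = (\<Sum>m<t. plen (connector m)) + yt t + (\<Sum>i=1..t. plen (Q i))"
    using \<open>plen (walk Q t) = _\<close> by simp_all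
  show "set (zigzag_path Q) \<subseteq> set X \<union> set Y"
    using G(4) \<open>xb t < length X\<close> by (auto intro: nth_mem)
qed

end

lemma H_edge_sym: "simple_graph E \<Longrightarrow> H_edge E X Y u v \<Longrightarrow> H_edge E X Y v u"
  unfolding simple_graph_def H_edge_def path_edge_def by blast

lemma H_edge_sublist:
  assumes "sublist X' X" "sublist Y' Y" "H_edge E X' Y' u v"
  shows "H_edge E X Y u v"
  using assms(3) path_edge_sublist[OF assms(1)] path_edge_sublist[OF assms(2)]
    set_mono_sublist[OF assms(1)] set_mono_sublist[OF assms(2)]
  unfolding H_edge_def by blast

lemma is_path_H_edge_sublist:
  assumes "is_path (H_edge E X' Y') P" "sublist X' X" "sublist Y' Y"
  shows "is_path (H_edge E X Y) P"
  using assms(1) H_edge_sublist[OF assms(2,3)] by (auto simp: is_path_def elim: successively_mono)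

lemma successively_path_edge: "successively (path_edge L) L"
  unfolding successively_conv_nth path_edge_def by blast

lemma is_path_H_edge:
  assumes "is_path E X" "is_path E Y"
  shows "is_path (H_edge E X Y) X" "is_path (H_edge E X Y) Y"
proof -
  have "successively (H_edge E X Y) X" "successively (H_edge E X Y) Y"
    by (rule successively_mono[OF successively_path_edge]; simp add: H_edge_def)+
  with assms show "is_path (H_edge E X Y) X" "is_path (H_edge E X Y) Y"
    by (simp_all add: is_path_def)
qed

lemma path_pair_H:
  assumes "simple_graph E" "section_pair E X Y"
  shows "path_pair (H_edge E X Y) X Y"
  using assms by unfold_locales (auto simp: section_pair_def H_edge_sym is_path_H_edge)

lemma above_segment_less:
  assumes "distinct X" "i \<le> j" "j < length X" "i' \<le> j'" "j' < length X"
    and "above X (set (segment X i j)) (set (segment X i' j'))"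
  shows "j < i'"
proof -
  have "X ! j \<in> set (segment X i j)" "X ! i' \<in> set (segment X i' j')"
    using assms(2,4) by (auto simp: set_segment)
  then obtain k k' where "k < k'" "k' < length X" "X ! k = X ! j" "X ! k' = X ! i'"
    using assms(6) unfolding above_def by blast
  with assms(1,3,4,5) show ?thesis by (simp add: nth_eq_iff_index_eq)
qed

lemma zigzag_of_subsection_pairs:
  fixes t :: nat
  assumes graph: "simple_graph E" and sec: "section_pair E X Y"
    and subs: "\<And>i. i \<in> {1..t} \<Longrightarrow> subsection_pair X Y (Xs i) (Ys i)"
    and order: "\<And>i j. 1 \<le> i \<Longrightarrow> i < j \<Longrightarrow> j \<le> t \<Longrightarrow>
                  above X (set (Xs i)) (set (Xs j)) \<and> below Y (set (Ys i)) (set (Ys j))"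
  obtains xt xb yt yb where "zigzag (H_edge E X Y) X Y t xt xb yt yb"
    "\<And>i. i \<in> {1..t} \<Longrightarrow> Xs i = segment X (xt i) (xb i) \<and> Ys i = segment Y (yt i) (yb i)"
proof -
  have "\<exists>xt xb yt yb. xt \<le> xb \<and> xb < length X \<and> Xs i = segment X xt xb \<and>
      yt \<le> yb \<and> yb < length Y \<and> Ys i = segment Y yt yb" if "i \<in> {1..t}" for i
    using subs[OF that] unfolding subsection_pair_def by (metis sublist_obtain_segment)
  then obtain xt xb yt yb where seg: "\<And>i. i \<in> {1..t} \<Longrightarrow>
      xt i \<le> xb i \<and> xb i < length X \<and> Xs i = segment X (xt i) (xb i) \<and>
      yt i \<le> yb i \<and> yb i < length Y \<and> Ys i = segment Y (yt i) (yb i)"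
    by metis
  interpret path_pair "H_edge E X Y" X Y by (rule path_pair_H[OF graph sec])
  have "distinct X" "distinct Y" using path_X path_Y by (simp_all add: is_path_def)
  have "zigzag (H_edge E X Y) X Y t xt xb yt yb"
  proof
    show "xt i \<le> xb i \<and> xb i < length X \<and> yt i \<le> yb i \<and> yb i < length Y" if "i \<in> {1..t}" for i
      using seg[OF that] by blast
    fix i j assume ij: "1 \<le> i" "i < j" "j \<le> t"
    then have "i \<in> {1..t}" "j \<in> {1..t}" by auto
    with order[OF ij] show "xb i < xt j" "yb j < yt i"
      using above_segment_less[OF \<open>distinct X\<close>] above_segment_less[OF \<open>distinct Y\<close>] seg
      unfolding below_def by metis+
  qed
  with seg show thesis using that by blast
qed

lemma zigzag_route:
  fixes t :: nat
  assumes graph: "simple_graph E" and sec: "section_pair E X Y" and "odd t"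
    and subs: "\<And>i. i \<in> {1..t} \<Longrightarrow> subsection_pair X Y (Xs i) (Ys i)"
    and order: "\<And>i j. 1 \<le> i \<Longrightarrow> i < j \<Longrightarrow> j \<le> t \<Longrightarrow>
                  above X (set (Xs i)) (set (Xs j)) \<and> below Y (set (Ys i)) (set (Ys j))"
  obtains K route where "\<And>Q. (\<And>i. i \<in> {1..t} \<Longrightarrow> path_in_H E (Xs i) (Ys i) (Q i) \<and>
      path_between (Q i) (if odd i then hd (Xs i) else last (Xs i)) (if odd i then hd (Ys i) else last (Ys i)))
    \<Longrightarrow> path_in_H E X Y (route Q) \<and> path_between (route Q) (hd X) (hd Y) \<and>
      plen (route Q) = K + (\<Sum>i=1..t. plen (Q i))"
proof -
  obtain xt xb yt yb where Z: "zigzag (H_edge E X Y) X Y t xt xb yt yb"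
    and seg: "\<And>i. i \<in> {1..t} \<Longrightarrow> Xs i = segment X (xt i) (xb i) \<and> Ys i = segment Y (yt i) (yb i)"
    using zigzag_of_subsection_pairs[where Xs = Xs and Ys = Ys, OF graph sec subs order] by blast
  interpret zigzag "H_edge E X Y" X Y t xt xb yt yb by (fact Z)
  define orient_all where
    "orient_all Q i = orient (if odd i then X ! xt i else Y ! yb i) (Q i)" for Q :: "nat \<Rightarrow> 'a list" and i
  show thesis
  proof (rule that[where K = "(\<Sum>m<t. plen (connector m)) + yt t" and route = "\<lambda>Q. zigzag_path (orient_all Q)"])
    fix Q assume Q: "\<And>i. i \<in> {1..t} \<Longrightarrow> path_in_H E (Xs i) (Ys i) (Q i) \<and>
      path_between (Q i) (if odd i then hd (Xs i) else last (Xs i)) (if odd i then hd (Ys i) else last (Ys i))"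
    have crossings: "crossing i (orient_all Q i)" and "plen (orient_all Q i) = plen (Q i)"
      if i: "i \<in> {1..t}" for i
    proof -
      have ends: "path_between (Q i) (if odd i then X ! xt i else Y ! yb i) (if odd i then Y ! yt i else X ! xb i)"
        using Q[OF i] seg[OF i] intervals[OF i] by (auto simp: hd_segment last_segment path_between_def)
      have "sublist (Xs i) X" "sublist (Ys i) Y" using subs[OF i] by (simp_all add: subsection_pair_def)
      then have "is_path (H_edge E X Y) (Q i)"
        using Q[OF i] is_path_H_edge_sublist by (auto simp: path_in_H_def)
      moreover have "set (Q i) \<subseteq> (!) X ` {xt i..xb i} \<union> (!) Y ` {yt i..yb i}"
        using Q[OF i] seg[OF i] by (simp add: path_in_H_def set_segment)
      ultimately show "crossing i (orient_all Q i)" "plen (orient_all Q i) = plen (Q i)"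
        using crossing_orient ends orient(4)[OF ends] unfolding orient_all_def by (auto simp: is_path_def)
    qed
    have "X \<noteq> []" "Y \<noteq> []" using path_X path_Y by (simp_all add: is_path_def)
    then show "path_in_H E X Y (zigzag_path (orient_all Q)) \<and>
        path_between (zigzag_path (orient_all Q)) (hd X) (hd Y) \<and>
        plen (zigzag_path (orient_all Q)) = (\<Sum>m<t. plen (connector m)) + yt t + (\<Sum>i=1..t. plen (Q i))"
      using zigzag_path[OF \<open>odd t\<close> crossings] \<open>\<And>i. i \<in> {1..t} \<Longrightarrow> plen (orient_all Q i) = plen (Q i)\<close>
      by (auto simp: path_in_H_def path_between_def hd_conv_nth)
  qed
qed

lemma plen_path_in_H_le:
  assumes "path_in_H E X Y P" "X \<noteq> []" "Y \<noteq> []"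
  shows "plen P \<le> plen X + plen Y + 1"
proof -
  have "length P = card (set P)"
    using assms(1) by (simp add: path_in_H_def is_path_def distinct_card)
  also have "\<dots> \<le> card (set X \<union> set Y)"
    using assms(1) by (intro card_mono) (auto simp: path_in_H_def)
  also have "\<dots> \<le> length X + length Y"
    using card_Un_le[of "set X" "set Y"] card_length[of X] card_length[of Y] by linarith
  finally show ?thesis using assms(2,3) by (simp add: plen_def)
qed

lemma plen_diff_le:
  assumes "section_pair E X Y" "subsection_pair X Y X' Y'"
    and "path_in_H E X' Y' P" "path_in_H E X' Y' P'" "path_between P' a b" "a \<in> set X'" "b \<in> set Y'"
  shows "int (plen P) - int (plen P') \<le> int (plen X' + plen Y')"
proof -
  have "X' \<noteq> []" "Y' \<noteq> []" "set X' \<subseteq> set X" "set Y' \<subseteq> set Y"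
    using assms(2) by (auto simp: subsection_pair_def set_mono_sublist)
  with assms(1,6,7) have "a \<noteq> b" unfolding section_pair_def by blast
  with assms(5) have "hd P' \<noteq> last P'" by (auto simp: path_between_def)
  moreover have "P' \<noteq> []" using assms(4) by (simp add: path_in_H_def is_path_def)
  ultimately have "1 \<le> plen P'" by (cases P') (auto simp: plen_def Suc_le_eq split: if_splits)
  with plen_path_in_H_le[OF assms(3) \<open>X' \<noteq> []\<close> \<open>Y' \<noteq> []\<close>] show ?thesis by linarith
qed

lemma sum_threshold_diff:
  fixes f g :: "nat \<Rightarrow> 'a::ab_group_add"
  assumes "finite I" "m \<le> n"
  shows "(\<Sum>i\<in>I. if i \<le> n then f i else g i) - (\<Sum>i\<in>I. if i \<le> m then f i else g i)
    = (\<Sum>i \<in> I \<inter> {m<..n}. f i - g i)"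
proof -
  have "(\<Sum>i\<in>I. if i \<le> n then f i else g i) - (\<Sum>i\<in>I. if i \<le> m then f i else g i)
      = (\<Sum>i\<in>I. if i \<in> {m<..n} then f i - g i else 0)"
    unfolding sum_subtractf[symmetric] using assms(2) by (intro sum.cong) auto
  also have "\<dots> = (\<Sum>i \<in> I \<inter> {m<..n}. f i - g i)"
    using assms(1) by (simp add: sum.inter_restrict)
  finally show ?thesis .
qed

lemma sum_le_two_terms_bounds:
  fixes h :: "'b \<Rightarrow> int"
  assumes "finite A" "a \<in> A" "card A \<le> 2" "\<And>i. i \<in> A \<Longrightarrow> 1 \<le> h i \<and> h i \<le> D"
  shows "1 \<le> (\<Sum>i\<in>A. h i) \<and> (\<Sum>i\<in>A. h i) \<le> 2 * D"
proof
  have "1 \<le> h a" using assms(2,4) by blast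
  also have "h a \<le> (\<Sum>i\<in>A. h i)"
    using assms by (intro member_le_sum) force+
  finally show "1 \<le> (\<Sum>i\<in>A. h i)" .
  have "(\<Sum>i\<in>A. h i) \<le> int (card A) * D"
    using assms(4) by (intro sum_bounded_above) auto
  also have "\<dots> \<le> 2 * D"
    using assms(2-4) by (intro mult_right_mono) force+
  finally show "(\<Sum>i\<in>A. h i) \<le> 2 * D" .
qed

lemma threshold_sums:
  fixes f g d :: "nat \<Rightarrow> int"
  assumes "odd t" and gap: "\<And>i. i \<in> {1..t} \<Longrightarrow> 1 \<le> d i \<and> d i \<le> f i - g i \<and> f i - g i \<le> D"
  defines "F n \<equiv> \<Sum>i=1..t. if i \<le> n then f i else g i"
  shows "(\<Sum>i=1..t. d i) \<le> F t - F 0"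
    and "k \<in> {1..(t+1) div 2} \<Longrightarrow> 1 \<le> F (2*k-1) - F (2*k-3) \<and> F (2*k-1) - F (2*k-3) \<le> 2 * D"
proof -
  have "(\<Sum>i=1..t. d i) \<le> (\<Sum>i=1..t. f i - g i)" using gap by (intro sum_mono) auto
  also have "\<dots> = F t - F 0" by (simp add: F_def sum_subtractf)
  finally show "(\<Sum>i=1..t. d i) \<le> F t - F 0" .
next
  assume k: "k \<in> {1..(t+1) div 2}"
  let ?A = "{1..t} \<inter> {2*k-3<..2*k-1}"
  have "F (2*k-1) - F (2*k-3) = (\<Sum>i\<in>?A. f i - g i)"
    unfolding F_def by (rule sum_threshold_diff) auto
  moreover have "2*k-1 \<in> ?A" using k \<open>odd t\<close> by (auto elim!: oddE)
  moreover have "card ?A \<le> 2"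
    using card_mono[OF finite_greaterThanAtMost inf_le2, of "{1..t}" "2*k-3" "2*k-1"] by simp
  moreover have "1 \<le> f i - g i \<and> f i - g i \<le> D" if "i \<in> ?A" for i
    using gap[of i] that by force
  ultimately show "1 \<le> F (2*k-1) - F (2*k-3) \<and> F (2*k-1) - F (2*k-3) \<le> 2 * D"
    using sum_le_two_terms_bounds[of ?A "2*k-1" "\<lambda>i. f i - g i" D] by simp
qed

theorem lemma4p5:
  fixes E :: "'v \<Rightarrow> 'v \<Rightarrow> bool"
    and X Y :: "'v list"
    and t :: nat
    and Xs Ys QR QB :: "nat \<Rightarrow> 'v list"
    and d :: "nat \<Rightarrow> int"
  assumes graph: "simple_graph E"
    and sec: "section_pair E X Y"
    and t_odd: "odd t" and t_pos: "t \<ge> 1"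
    and subs: "\<And>i. i \<in> {1..t} \<Longrightarrow> subsection_pair X Y (Xs i) (Ys i)"
    and Xdisj: "\<And>i j. i \<in> {1..t} \<Longrightarrow> j \<in> {1..t} \<Longrightarrow> i \<noteq> j \<Longrightarrow> set (Xs i) \<inter> set (Xs j) = {}"
    and Ydisj: "\<And>i j. i \<in> {1..t} \<Longrightarrow> j \<in> {1..t} \<Longrightarrow> i \<noteq> j \<Longrightarrow> set (Ys i) \<inter> set (Ys j) = {}"
    and order: "\<And>i j. 1 \<le> i \<Longrightarrow> i < j \<Longrightarrow> j \<le> t \<Longrightarrow>
                  above X (set (Xs i)) (set (Xs j)) \<and> below Y (set (Ys i)) (set (Ys j))"
    and d_pos: "\<And>i. i \<in> {1..t} \<Longrightarrow> d i \<ge> 1"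
    and Qpaths: "\<And>i. i \<in> {1..t} \<Longrightarrow>
                   path_in_H E (Xs i) (Ys i) (QR i) \<and> path_in_H E (Xs i) (Ys i) (QB i) \<and>
                   int (plen (QR i)) - int (plen (QB i)) \<ge> d i"
    and Qodd: "\<And>i. i \<in> {1..t} \<Longrightarrow> odd i \<Longrightarrow>
                   path_between (QR i) (hd (Xs i)) (hd (Ys i)) \<and>
                   path_between (QB i) (hd (Xs i)) (hd (Ys i))"
    and Qeven: "\<And>i. i \<in> {1..t} \<Longrightarrow> even i \<Longrightarrow>
                   path_between (QR i) (last (Xs i)) (last (Ys i)) \<and>
                   path_between (QB i) (last (Xs i)) (last (Ys i))"
  shows "\<exists>P :: nat \<Rightarrow> 'v list.
           (\<forall>i \<in> {1..(t+3) div 2}. path_in_H E X Y (P i) \<and> path_between (P i) (hd X) (hd Y)) \<and>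
           int (plen (P ((t+3) div 2))) - int (plen (P 1)) \<ge> (\<Sum>i=1..t. d i) \<and>
           (\<forall>i \<in> {1..(t+1) div 2}.
              1 \<le> int (plen (P (i+1))) - int (plen (P i)) \<and>
              int (plen (P (i+1))) - int (plen (P i))
                \<le> 2 * int (Max ((\<lambda>i. plen (Xs i) + plen (Ys i)) ` {1..t})))"
proof -
  obtain K route where route: "\<And>Q. (\<And>i. i \<in> {1..t} \<Longrightarrow> path_in_H E (Xs i) (Ys i) (Q i) \<and>
      path_between (Q i) (if odd i then hd (Xs i) else last (Xs i)) (if odd i then hd (Ys i) else last (Ys i)))
    \<Longrightarrow> path_in_H E X Y (route Q) \<and> path_between (route Q) (hd X) (hd Y) \<and>
      plen (route Q) = K + (\<Sum>i=1..t. plen (Q i))"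
    using zigzag_route[where Xs = Xs and Ys = Ys, OF graph sec t_odd subs order] by blast
  define P where "P k = route (\<lambda>i. if i \<le> 2*k-3 then QR i else QB i)" for k
  define F where "F n = (\<Sum>i=1..t. if i \<le> n then int (plen (QR i)) else int (plen (QB i)))" for n
  have P: "path_in_H E X Y (P k) \<and> path_between (P k) (hd X) (hd Y) \<and> int (plen (P k)) = int K + F (2*k-3)"
    for k
    using route[of "\<lambda>i. if i \<le> 2*k-3 then QR i else QB i"] Qpaths Qodd Qeven
    unfolding P_def F_def by (force simp: of_nat_sum if_distrib)
  define D where "D = int (Max ((\<lambda>i. plen (Xs i) + plen (Ys i)) ` {1..t}))"
  have gap: "1 \<le> d i \<and> d i \<le> int (plen (QR i)) - int (plen (QB i)) \<and>
      int (plen (QR i)) - int (plen (QB i)) \<le> D" if i: "i \<in> {1..t}" for i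
  proof -
    have "Xs i \<noteq> []" "Ys i \<noteq> []" using subs[OF i] by (simp_all add: subsection_pair_def)
    then have "int (plen (QR i)) - int (plen (QB i)) \<le> int (plen (Xs i) + plen (Ys i))"
      using plen_diff_le[OF sec subs[OF i]] Qpaths[OF i] Qodd[OF i] Qeven[OF i] by (cases "odd i") auto
    also have "\<dots> \<le> D" unfolding D_def using i by (intro of_nat_mono Max_ge) auto
    finally show ?thesis using Qpaths[OF i] d_pos[OF i] by auto
  qed
  note sums = threshold_sums[where f = "\<lambda>i. int (plen (QR i))" and g = "\<lambda>i. int (plen (QB i))",
      OF t_odd gap, folded F_def]
  have "2 * ((t + 3) div 2) - 3 = t" "\<And>k::nat. 2 * (k + 1) - 3 = 2 * k - 1" using t_odd by (auto elim: oddE)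
  then show ?thesis
    using P sums unfolding D_def by (intro exI[of _ P]) auto
qed

end
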